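(* Let $(X_t)_{t\ge1}$ be a Markov chain on $[K^*]$ (with arbitrary initial distribution) whose transition matrix $Q^*$ has all entries $\ge\sigma_-$, where $\sigma_-\in(0,1)$. Let $\delta>0$. Then almost surely $$\liminf_{n\to\infty}\ \inf_{S}\ \inf_{x^*\in[K^*]}\ \frac1n\sum_{t\in S}\mathbf 1\{X_t=x^*\}\ \ge\ \frac{\delta\sigma_-}{4},$$ where the infimum over $S$ is over all segments $S\subset\{1,\dots,n\}$ with $|S|\ge\delta n$, a segment being a set of the form $[a,b]\cap\mathbb Z$ with $a,b\in\mathbb R$.
   Context: $[K^*]=\{1,\dots,K^*\}$, $K^*\ge1$ an integer; $|S|$ is the cardinality of $S$. *)

theory Defs
  imports "HOL-Probability.Probability"
begin

text \<open>A segment: a set of the form [a,b] \<inter> Z with real a, b (restricted to naturals,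
  which is harmless since we only consider segments contained in {1..n}).\<close>
definition segment :: "nat set \<Rightarrow> bool" where
  "segment S \<longleftrightarrow> (\<exists>a b :: real. S = {t. a \<le> real t \<and> real t \<le> b})"

definition stochastic_matrix :: "nat \<Rightarrow> (nat \<Rightarrow> nat \<Rightarrow> real) \<Rightarrow> bool" where
  "stochastic_matrix K Q \<longleftrightarrow>
     (\<forall>i\<in>{1..K}. \<forall>j\<in>{1..K}. 0 \<le> Q i j) \<and> (\<forall>i\<in>{1..K}. (\<Sum>j=1..K. Q i j) = 1)"

definition markov_chain_on ::
  "'a measure \<Rightarrow> nat \<Rightarrow> (nat \<Rightarrow> nat \<Rightarrow> real) \<Rightarrow> (nat \<Rightarrow> 'a \<Rightarrow> nat) \<Rightarrow> bool" where
  "markov_chain_on M K Q X \<longleftrightarrow>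
     prob_space M \<and>
     (\<forall>t. X t \<in> measurable M (count_space UNIV)) \<and>
     (\<forall>t\<ge>1. \<forall>\<omega>\<in>space M. X t \<omega> \<in> {1..K}) \<and>
     stochastic_matrix K Q \<and>
     (\<forall>n\<ge>1. \<forall>xs :: nat \<Rightarrow> nat.
        measure M {\<omega>\<in>space M. \<forall>t\<in>{1..n+1}. X t \<omega> = xs t}
        = measure M {\<omega>\<in>space M. \<forall>t\<in>{1..n}. X t \<omega> = xs t} * Q (xs n) (xs (n+1)))"

end

theory Submission
  imports Defs
begin

text \<open>Fix a state x and a finite set W of times \<open>\<ge> 2\<close>. Whatever the past, the next step of the chain
  lands in x with probability at least \<open>\<sigma>\<close>, so conditioning one step at a time gives the
  Chernoff-type bound \<open>E[2^-(visits to x during W)] \<le> (1 - \<sigma>/2)^|W|\<close>. By Markov's inequality a segment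
  of length at least \<open>\<delta>n\<close> contains at most \<open>\<delta>\<sigma>n/4\<close> visits to x with probability
  \<open>O(exp(-\<delta>\<sigma>n/4))\<close>. There are at most \<open>n\<^sup>2K\<close> pairs of a segment and a state, so these bad events have
  summable probabilities, and Borel--Cantelli shows that almost surely they eventually stop occurring.\<close>

lemma sum_PiE_insert:
  assumes "a \<notin> S"
  shows "(\<Sum>h\<in>Pi\<^sub>E (insert a S) T. f h) = (\<Sum>g\<in>Pi\<^sub>E S T. \<Sum>y\<in>T a. f (g(a := y)))"
proof -
  have "(\<Sum>h\<in>Pi\<^sub>E (insert a S) T. f h) = (\<Sum>(y, g)\<in>T a \<times> Pi\<^sub>E S T. f (g(a := y)))"
    unfolding PiE_insert_eq by (subst sum.reindex[OF inj_combinator[OF assms]]) (simp add: case_prod_unfold)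
  also have "\<dots> = (\<Sum>g\<in>Pi\<^sub>E S T. \<Sum>y\<in>T a. f (g(a := y)))"
    by (simp add: sum.cartesian_product[symmetric] sum.swap[of _ "T a"])
  finally show ?thesis .
qed

lemma card_filter_fun_upd:
  assumes "finite W"
  shows "card {t\<in>W. (g(a := y)) t = x} = card {t\<in>W - {a}. g t = x} + (if a \<in> W \<and> y = x then 1 else 0)"
proof -
  have "{t\<in>W. (g(a := y)) t = x} = {t\<in>W - {a}. g t = x} \<union> (if a \<in> W \<and> y = x then {a} else {})"
    by auto
  then show ?thesis using assms by (auto simp: card_Un_disjoint)
qed

lemma segment_eq_atLeastAtMost:
  assumes "segment S" "finite S" "S \<noteq> {}"
  shows "S = {Min S..Max S}"
proof
  show "S \<subseteq> {Min S..Max S}" using assms(2) by auto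
  obtain a b :: real where S: "S = {t. a \<le> real t \<and> real t \<le> b}"
    using assms(1) unfolding segment_def by blast
  have "Min S \<in> S" "Max S \<in> S" using assms(2,3) by auto
  then show "{Min S..Max S} \<subseteq> S" unfolding S by auto
qed

lemma summable_square_mult_exp_neg:
  fixes c :: real
  assumes c: "0 < c"
  shows "summable (\<lambda>n. real n ^ 2 * exp (- c * real n))"
proof (rule summable_comparison_test')
  show "summable (\<lambda>n. 8 / c^2 * exp (- c/2) ^ n)"
    using c by (intro summable_mult summable_geometric) auto
  fix n :: nat
  have "0 \<le> c * real n / 2" using c by simp
  then have "(c * real n / 2)^2 / 2 \<le> exp (c * real n / 2)"
    using exp_lower_Taylor_quadratic by fastforce
  then have "real n ^ 2 \<le> 8 / c^2 * exp (c * real n / 2)"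
    using c by (simp add: power_mult_distrib field_simps)
  then have "real n ^ 2 * exp (- c * real n) \<le> 8 / c^2 * exp (c * real n / 2) * exp (- c * real n)"
    by (intro mult_right_mono) auto
  also have "\<dots> = 8 / c^2 * exp (- c/2) ^ n"
    by (simp add: exp_of_nat_mult[symmetric] exp_add[symmetric] field_simps)
  finally show "norm (real n ^ 2 * exp (- c * real n)) \<le> 8 / c^2 * exp (- c/2) ^ n" by simp
qed

lemma one_le_powr_mult_half_power:
  assumes "real v \<le> m"
  shows "1 \<le> 2 powr m * (1/2 :: real) ^ v"
proof -
  have "(1/2 :: real) ^ v = 2 powr (- real v)"
    by (simp add: powr_minus powr_realpow power_one_over inverse_eq_divide)
  then have "2 powr m * (1/2 :: real) ^ v = 2 powr (m - real v)"
    by (simp add: powr_add[symmetric])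
  then show ?thesis using assms by (simp add: ge_one_powr_ge_zero)
qed

locale finite_markov_chain =
  fixes M :: "'a measure" and K :: nat and Q :: "nat \<Rightarrow> nat \<Rightarrow> real"
    and X :: "nat \<Rightarrow> 'a \<Rightarrow> nat"
  assumes markov_chain: "markov_chain_on M K Q X"
begin

sublocale prob_space M
  using markov_chain unfolding markov_chain_on_def by simp

lemma measurable_X [measurable]: "X t \<in> measurable M (count_space UNIV)"
  using markov_chain unfolding markov_chain_on_def by simp

lemma X_in_states: "1 \<le> t \<Longrightarrow> \<omega> \<in> space M \<Longrightarrow> X t \<omega> \<in> {1..K}"
  using markov_chain unfolding markov_chain_on_def by simp

lemma stochastic: "stochastic_matrix K Q"
  using markov_chain unfolding markov_chain_on_def by simp

lemma Q_le_1:
  assumes "i \<in> {1..K}" "j \<in> {1..K}"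
  shows "Q i j \<le> 1"
proof -
  have "Q i j \<le> (\<Sum>k=1..K. Q i k)"
    using stochastic assms by (intro member_le_sum) (auto simp: stochastic_matrix_def)
  then show ?thesis using stochastic assms(1) by (simp add: stochastic_matrix_def)
qed

definition paths :: "nat \<Rightarrow> (nat \<Rightarrow> nat) set" where
  "paths n = Pi\<^sub>E {1..n} (\<lambda>_. {1..K})"

definition cylinder :: "nat \<Rightarrow> (nat \<Rightarrow> nat) \<Rightarrow> 'a set" where
  "cylinder n xs = {\<omega>\<in>space M. \<forall>t\<in>{1..n}. X t \<omega> = xs t}"

lemma finite_paths: "finite (paths n)"
  unfolding paths_def by (rule finite_PiE) auto

lemma sets_cylinder [measurable]: "cylinder n xs \<in> sets M"
  unfolding cylinder_def by measurable

lemma path_of_trajectory: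
  assumes "\<omega> \<in> space M"
  shows "restrict (\<lambda>t. X t \<omega>) {1..n} \<in> paths n" "\<omega> \<in> cylinder n (restrict (\<lambda>t. X t \<omega>) {1..n})"
  using assms X_in_states unfolding paths_def cylinder_def by auto

lemma sum_prob_cylinder_le_1: "(\<Sum>xs\<in>paths n. prob (cylinder n xs)) \<le> 1"
proof -
  have "disjoint_family_on (cylinder n) (paths n)"
    unfolding disjoint_family_on_def cylinder_def paths_def by auto (metis PiE_ext)
  then have "(\<Sum>xs\<in>paths n. prob (cylinder n xs)) = prob (\<Union>xs\<in>paths n. cylinder n xs)"
    by (intro finite_measure_finite_Union[symmetric]) (auto simp: finite_paths)
  then show ?thesis by simp
qed

lemma prob_cylinder_fun_upd:
  assumes "1 \<le> n"
  shows "prob (cylinder (Suc n) (g(Suc n := j))) = prob (cylinder n g) * Q (g n) j"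
proof -
  have "cylinder n (g(Suc n := j)) = cylinder n g" unfolding cylinder_def by auto
  moreover have "prob (cylinder (n + 1) xs) = prob (cylinder n xs) * Q (xs n) (xs (n + 1))" for xs
    using markov_chain assms unfolding markov_chain_on_def cylinder_def by blast
  ultimately show ?thesis by simp
qed

lemma sum_row_weighted_le:
  assumes Q_ge: "\<sigma> \<le> Q i x" and "i \<in> {1..K}" "x \<in> {1..K}" and "\<theta> \<le> 1"
  shows "(\<Sum>j=1..K. (if j = x then \<theta> else 1) * Q i j) \<le> 1 - (1 - \<theta>) * \<sigma>"
proof -
  have "(\<Sum>j=1..K. (if j = x then \<theta> else 1) * Q i j) = (\<Sum>j=1..K. Q i j - (if j = x then (1 - \<theta>) * Q i x else 0))"
    by (intro sum.cong) (auto simp: algebra_simps)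
  also have "\<dots> = 1 - (1 - \<theta>) * Q i x"
    using stochastic assms by (simp add: sum_subtractf stochastic_matrix_def)
  also have "\<dots> \<le> 1 - (1 - \<theta>) * \<sigma>"
    using assms by (simp add: mult_left_mono)
  finally show ?thesis .
qed

text \<open>The left-hand side is the expectation of \<open>\<theta>^(visits to x during W)\<close>. Time 1 is excluded from W
  because the law of \<open>X 1\<close> is arbitrary.\<close>

lemma sum_paths_weighted_le:
  assumes Q_ge: "\<And>i. i \<in> {1..K} \<Longrightarrow> \<sigma> \<le> Q i x" and x: "x \<in> {1..K}"
    and \<theta>: "0 \<le> \<theta>" "\<theta> \<le> 1" and n: "1 \<le> n" and W: "W \<subseteq> {2..n}"
  shows "(\<Sum>xs\<in>paths n. \<theta> ^ card {t\<in>W. xs t = x} * prob (cylinder n xs)) \<le> (1 - (1 - \<theta>) * \<sigma>) ^ card W"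
  using n W
proof (induction n arbitrary: W rule: nat_induct_at_least)
  case base
  then show ?case using sum_prob_cylinder_le_1[of 1] by simp
next
  case (Suc n)
  define \<rho> where "\<rho> = 1 - (1 - \<theta>) * \<sigma>"
  define W' where "W' = W - {Suc n}"
  define bnd where "bnd = (if Suc n \<in> W then \<rho> else 1)"
  define c where "c = (\<lambda>j. \<theta> ^ (if Suc n \<in> W \<and> j = x then 1 else 0))"
  have finW: "finite W" using Suc.prems finite_subset by blast
  have W': "W' \<subseteq> {2..n}" using Suc.prems unfolding W'_def by auto
  have "\<sigma> \<le> 1" using Q_ge[OF x] Q_le_1[OF x x] by simp
  then have "(1 - \<theta>) * \<sigma> \<le> 1"
    using \<theta> by (cases "\<sigma> \<le> 0") (auto intro: order_trans[OF mult_left_le] simp: mult_nonneg_nonpos)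
  then have bnd_nonneg: "0 \<le> bnd" unfolding bnd_def \<rho>_def by simp
  have pow_W: "\<rho> ^ card W = bnd * \<rho> ^ card W'"
  proof (cases "Suc n \<in> W")
    case True
    then have "card W = Suc (card W')" using card_Suc_Diff1[OF finW True] unfolding W'_def by simp
    then show ?thesis using True unfolding bnd_def by simp
  qed (simp add: bnd_def W'_def)
  have row: "(\<Sum>j=1..K. c j * Q i j) \<le> bnd" if i: "i \<in> {1..K}" for i
  proof (cases "Suc n \<in> W")
    case True
    then have "c = (\<lambda>j. if j = x then \<theta> else 1)" unfolding c_def by auto
    then show ?thesis using True sum_row_weighted_le[OF Q_ge[OF i] i x \<theta>(2)] unfolding bnd_def \<rho>_def by simp
  next
    case False
    then show ?thesis using stochastic i unfolding c_def bnd_def stochastic_matrix_def by simp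
  qed
  have paths_Suc: "paths (Suc n) = Pi\<^sub>E (insert (Suc n) {1..n}) (\<lambda>_. {1..K})"
    unfolding paths_def by (simp add: atLeastAtMostSuc_conv Suc.hyps)
  have "(\<Sum>xs\<in>paths (Suc n). \<theta> ^ card {t\<in>W. xs t = x} * prob (cylinder (Suc n) xs))
      = (\<Sum>g\<in>paths n. \<Sum>j=1..K.
           \<theta> ^ card {t\<in>W. (g(Suc n := j)) t = x} * prob (cylinder (Suc n) (g(Suc n := j))))"
    unfolding paths_Suc paths_def[of n] by (rule sum_PiE_insert) simp
  also have "\<dots> = (\<Sum>g\<in>paths n. \<theta> ^ card {t\<in>W'. g t = x} * prob (cylinder n g) * (\<Sum>j=1..K. c j * Q (g n) j))"
    unfolding card_filter_fun_upd[OF finW] prob_cylinder_fun_upd[OF Suc.hyps]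
    by (simp add: power_add sum_distrib_left W'_def c_def mult_ac)
  also have "\<dots> \<le> (\<Sum>g\<in>paths n. \<theta> ^ card {t\<in>W'. g t = x} * prob (cylinder n g) * bnd)"
    using Suc.hyps \<theta> by (intro sum_mono mult_left_mono row) (auto simp: paths_def)
  also have "\<dots> \<le> \<rho> ^ card W' * bnd"
    unfolding sum_distrib_right[symmetric] \<rho>_def
    by (intro mult_right_mono Suc.IH W' bnd_nonneg)
  finally show ?case using pow_W unfolding \<rho>_def by (simp add: mult.commute)
qed

definition few_visits :: "nat set \<Rightarrow> nat \<Rightarrow> real \<Rightarrow> 'a set" where
  "few_visits W x m = {\<omega>\<in>space M. real (card {t\<in>W. X t \<omega> = x}) \<le> m}"

lemma sets_few_visits [measurable]:
  assumes "finite W"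
  shows "few_visits W x m \<in> sets M"
proof -
  have "real (card {t\<in>W. X t \<omega> = x}) = (\<Sum>t\<in>W. if X t \<omega> = x then 1 else 0)" for \<omega>
    using assms by (simp add: sum.If_cases Int_def)
  then show ?thesis unfolding few_visits_def by (simp only:) measurable
qed

lemma prob_few_visits_le:
  assumes Q_ge: "\<And>i. i \<in> {1..K} \<Longrightarrow> \<sigma> \<le> Q i x" and x: "x \<in> {1..K}"
    and W: "finite W" "W \<subseteq> {2..}"
  shows "prob (few_visits W x m) \<le> 2 powr m * (1 - \<sigma>/2) ^ card W"
proof -
  define n where "n = Max (insert 1 W)"
  have n: "1 \<le> n" "W \<subseteq> {2..n}" using W unfolding n_def by auto
  define F where "F = {xs\<in>paths n. real (card {t\<in>W. xs t = x}) \<le> m}"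
  have "few_visits W x m \<subseteq> (\<Union>xs\<in>F. cylinder n xs)"
  proof
    fix \<omega> assume \<omega>: "\<omega> \<in> few_visits W x m"
    define xs where "xs = restrict (\<lambda>t. X t \<omega>) {1..n}"
    have "card {t\<in>W. xs t = x} = card {t\<in>W. X t \<omega> = x}"
      unfolding xs_def using n by (intro arg_cong[where f = card]) auto
    then show "\<omega> \<in> (\<Union>xs\<in>F. cylinder n xs)"
      using \<omega> path_of_trajectory[of \<omega> n] unfolding F_def few_visits_def xs_def[symmetric] by auto
  qed
  then have "prob (few_visits W x m) \<le> (\<Sum>xs\<in>F. prob (cylinder n xs))"
    using finite_paths unfolding F_def
    by (intro order_trans[OF finite_measure_mono finite_measure_subadditive_finite]) auto
  also have "\<dots> \<le> (\<Sum>xs\<in>F. 2 powr m * ((1/2) ^ card {t\<in>W. xs t = x} * prob (cylinder n xs)))"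
  proof (intro sum_mono)
    fix xs assume "xs \<in> F"
    then have "1 \<le> 2 powr m * (1/2) ^ card {t\<in>W. xs t = x}"
      unfolding F_def by (intro one_le_powr_mult_half_power) simp
    from mult_right_mono[OF this measure_nonneg]
    show "prob (cylinder n xs) \<le> 2 powr m * ((1/2) ^ card {t\<in>W. xs t = x} * prob (cylinder n xs))"
      by (simp add: mult.assoc)
  qed
  also have "\<dots> \<le> (\<Sum>xs\<in>paths n. 2 powr m * ((1/2) ^ card {t\<in>W. xs t = x} * prob (cylinder n xs)))"
    using finite_paths unfolding F_def by (intro sum_mono2) auto
  also have "\<dots> \<le> 2 powr m * (1 - \<sigma>/2) ^ card W"
    using sum_paths_weighted_le[OF Q_ge x, of "1/2" n W] n
    by (simp add: sum_distrib_left[symmetric] algebra_simps)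
  finally show ?thesis .
qed

lemma prob_few_visits_exp_le:
  assumes Q_ge: "\<And>i. i \<in> {1..K} \<Longrightarrow> \<sigma> \<le> Q i x" and \<sigma>: "0 < \<sigma>" and x: "x \<in> {1..K}"
    and W: "finite W" "W \<subseteq> {2..}" and L: "0 \<le> L" "L \<le> real (card W) + 1"
  shows "prob (few_visits W x (\<sigma> * L / 4)) \<le> exp (- \<sigma> * L / 4) / (1 - \<sigma>/2)"
proof -
  define r where "r = 1 - \<sigma>/2"
  have "\<sigma> \<le> 1" using Q_ge[OF x] Q_le_1[OF x x] by simp
  then have r: "0 < r" unfolding r_def by simp
  have r_le: "r \<le> exp (- \<sigma>/2)" using exp_ge_add_one_self[of "- \<sigma>/2"] unfolding r_def by simp
  have "2 powr (\<sigma> * L / 4) = exp (ln 2 * (\<sigma> * L / 4))" by (simp add: powr_def)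
  also have "\<dots> \<le> exp (\<sigma> * L / 4)"
    using ln_2_less_1 \<sigma> L by (intro exp_mono mult_left_le_one_le) auto
  finally have powr_le: "2 powr (\<sigma> * L / 4) \<le> exp (\<sigma> * L / 4)" .
  have "r ^ card W = r ^ (card W + 1) / r" using r by simp
  also have "\<dots> \<le> exp (- \<sigma>/2) ^ (card W + 1) / r"
    using r r_le by (intro divide_right_mono power_mono) auto
  also have "\<dots> = exp (- \<sigma> * (real (card W) + 1) / 2) / r"
    unfolding exp_of_nat_mult[symmetric] by (simp add: field_simps)
  also have "\<dots> \<le> exp (- \<sigma> * L / 2) / r"
    using r \<sigma> L by (intro divide_right_mono) auto
  finally have pow_le: "r ^ card W \<le> exp (- \<sigma> * L / 2) / r" .
  have "prob (few_visits W x (\<sigma> * L / 4)) \<le> 2 powr (\<sigma> * L / 4) * r ^ card W"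
    unfolding r_def by (rule prob_few_visits_le[OF Q_ge x W])
  also have "\<dots> \<le> exp (\<sigma> * L / 4) * (exp (- \<sigma> * L / 2) / r)"
    using powr_le pow_le r by (intro mult_mono) auto
  also have "\<dots> = exp (- \<sigma> * L / 4) / r"
    by (simp add: exp_add[symmetric])
  finally show ?thesis unfolding r_def .
qed

end

locale minorized_markov_chain = finite_markov_chain +
  fixes \<sigma> :: real
  assumes Q_ge: "\<And>i j. i \<in> {1..K} \<Longrightarrow> j \<in> {1..K} \<Longrightarrow> \<sigma> \<le> Q i j"
    and \<sigma>_pos: "0 < \<sigma>"
begin

definition undervisited :: "real \<Rightarrow> nat \<Rightarrow> 'a set" where
  "undervisited \<delta> n = (\<Union>(a, b, x)\<in>{1..n} \<times> {1..n} \<times> {1..K}.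
     if \<delta> * real n \<le> real (Suc b - a) then few_visits {max 2 a..b} x (\<sigma> * (\<delta> * real n) / 4) else {})"

lemma sets_undervisited [measurable]: "undervisited \<delta> n \<in> sets M"
  unfolding undervisited_def by (auto simp: case_prod_unfold)

lemma prob_undervisited_le:
  assumes \<delta>: "0 < \<delta>"
  shows "prob (undervisited \<delta> n) \<le> real K / (1 - \<sigma>/2) * (real n ^ 2 * exp (- (\<sigma> * \<delta> / 4) * real n))"
proof -
  let ?bound = "exp (- (\<sigma> * \<delta> / 4) * real n) / (1 - \<sigma>/2)"
  have "prob (undervisited \<delta> n) \<le> (\<Sum>(a, b, x)\<in>{1..n} \<times> {1..n} \<times> {1..K}.
     prob (if \<delta> * real n \<le> real (Suc b - a) then few_visits {max 2 a..b} x (\<sigma> * (\<delta> * real n) / 4) else {}))"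
    unfolding undervisited_def case_prod_unfold
    by (intro finite_measure_subadditive_finite) auto
  also have "\<dots> \<le> (\<Sum>(a, b, x)\<in>{1..n} \<times> {1..n} \<times> {1..K}. ?bound)"
  proof (intro sum_mono, clarify)
    fix a b x assume a: "a \<in> {1..n}" and x: "x \<in> {1..K}"
    have "Suc b - a \<le> card {max 2 a..b} + 1" using a by auto
    then have "real (Suc b - a) \<le> real (card {max 2 a..b}) + 1" by linarith
    then show "prob (if \<delta> * real n \<le> real (Suc b - a) then few_visits {max 2 a..b} x (\<sigma> * (\<delta> * real n) / 4) else {})
        \<le> ?bound"
      using prob_few_visits_exp_le[OF Q_ge \<sigma>_pos x, of "{max 2 a..b}" "\<delta> * real n"] \<delta> x \<sigma>_pos Q_ge[OF x x] Q_le_1[OF x x]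
      by (auto simp: mult.assoc)
  qed
  also have "\<dots> = real K / (1 - \<sigma>/2) * (real n ^ 2 * exp (- (\<sigma> * \<delta> / 4) * real n))"
    by (simp add: card_cartesian_product power2_eq_square)
  finally show ?thesis .
qed

lemma few_visits_subset_undervisited:
  assumes "a \<in> {1..n}" "b \<in> {1..n}" "x \<in> {1..K}" "\<delta> * real n \<le> real (Suc b - a)"
  shows "few_visits {max 2 a..b} x (\<sigma> * (\<delta> * real n) / 4) \<subseteq> undervisited \<delta> n"
  unfolding undervisited_def using assms by (intro SUP_upper2[of "(a, b, x)"]) auto

lemma undervisited_segment_visits:
  assumes \<omega>: "\<omega> \<in> space M" "\<omega> \<notin> undervisited \<delta> n" and \<delta>: "0 < \<delta>" and n: "1 \<le> n"
    and S: "segment S" "S \<subseteq> {1..n}" "\<delta> * real n \<le> real (card S)" and x: "x \<in> {1..K}"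
  shows "\<delta> * \<sigma> / 4 \<le> real (card {t\<in>S. X t \<omega> = x}) / real n"
proof -
  have finS: "finite S" using S(2) finite_subset by blast
  have "0 < \<delta> * real n" using \<delta> n by simp
  then have "S \<noteq> {}" using S(3) by auto
  then have S_eq: "S = {Min S..Max S}" using segment_eq_atLeastAtMost[OF S(1) finS] by blast
  have "Min S \<in> S" "Max S \<in> S" using finS \<open>S \<noteq> {}\<close> by auto
  then have "Min S \<in> {1..n}" "Max S \<in> {1..n}" using S(2) by blast+
  moreover have "\<delta> * real n \<le> real (Suc (Max S) - Min S)" using S(3) S_eq by (metis card_atLeastAtMost)
  ultimately have "\<omega> \<notin> few_visits {max 2 (Min S)..Max S} x (\<sigma> * (\<delta> * real n) / 4)"
    using \<omega>(2) few_visits_subset_undervisited x by blast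
  then have "\<sigma> * (\<delta> * real n) / 4 < real (card {t\<in>{max 2 (Min S)..Max S}. X t \<omega> = x})"
    using \<omega>(1) unfolding few_visits_def by auto
  also have "\<dots> \<le> real (card {t\<in>S. X t \<omega> = x})"
    using finS by (subst (2) S_eq) (intro of_nat_mono card_mono, auto)
  finally show ?thesis using n by (simp add: pos_le_divide_eq mult_ac)
qed

lemma summable_prob_undervisited:
  assumes "0 < \<delta>"
  shows "summable (\<lambda>n. prob (undervisited \<delta> n))"
proof (rule summable_comparison_test'[where N = 0])
  show "summable (\<lambda>n. real K / (1 - \<sigma>/2) * (real n ^ 2 * exp (- (\<sigma> * \<delta> / 4) * real n)))"
    using assms \<sigma>_pos by (intro summable_mult summable_square_mult_exp_neg) simp
qed (use prob_undervisited_le[OF assms] in simp)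

lemma liminf_segment_visits_ge:
  assumes "\<forall>\<^sub>F n in sequentially. \<omega> \<in> space M - undervisited \<delta> n" and "0 < \<delta>"
  shows "liminf (\<lambda>n. INF S\<in>{S. segment S \<and> S \<subseteq> {1..n} \<and> real (card S) \<ge> \<delta> * real n}.
           INF x\<in>{1..K}. ereal (real (card {t\<in>S. X t \<omega> = x}) / real n)) \<ge> ereal (\<delta> * \<sigma> / 4)"
proof (rule Liminf_bounded)
  from eventually_ge_at_top[of 1] assms(1)
  show "\<forall>\<^sub>F n in sequentially. ereal (\<delta> * \<sigma> / 4) \<le> (INF S\<in>{S. segment S \<and> S \<subseteq> {1..n} \<and> real (card S) \<ge> \<delta> * real n}.
      INF x\<in>{1..K}. ereal (real (card {t\<in>S. X t \<omega> = x}) / real n))"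
  proof eventually_elim
    case (elim n)
    show ?case
    proof (intro INF_greatest, unfold ereal_less_eq(3))
      fix S x assume "S \<in> {S. segment S \<and> S \<subseteq> {1..n} \<and> real (card S) \<ge> \<delta> * real n}" "x \<in> {1..K}"
      with elim show "\<delta> * \<sigma> / 4 \<le> real (card {t\<in>S. X t \<omega> = x}) / real n"
        using assms(2) by (intro undervisited_segment_visits) auto
    qed
  qed
qed

end

theorem lemma13:
  fixes M :: "'a measure" and K :: nat and Q :: "nat \<Rightarrow> nat \<Rightarrow> real"
    and X :: "nat \<Rightarrow> 'a \<Rightarrow> nat" and \<sigma> \<delta> :: real
  assumes "K \<ge> 1"
    and "markov_chain_on M K Q X"
    and "0 < \<sigma>" and "\<sigma> < 1"
    and "\<forall>i\<in>{1..K}. \<forall>j\<in>{1..K}. Q i j \<ge> \<sigma>"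
    and "\<delta> > 0"
  shows "AE \<omega> in M.
           liminf (\<lambda>n. INF S\<in>{S. segment S \<and> S \<subseteq> {1..n} \<and> real (card S) \<ge> \<delta> * real n}.
                         INF x\<in>{1..K}. ereal (real (card {t\<in>S. X t \<omega> = x}) / real n))
           \<ge> ereal (\<delta> * \<sigma> / 4)"
proof -
  interpret minorized_markov_chain M K Q X \<sigma>
    using assms by unfold_locales auto
  have "AE \<omega> in M. \<forall>\<^sub>F n in sequentially. \<omega> \<in> space M - undervisited \<delta> n"
    using summable_prob_undervisited[OF assms(6)]
    by (intro borel_cantelli_AE1) (auto simp: emeasure_eq_measure)
  then show ?thesis
    by (rule eventually_mono) (use liminf_segment_visits_ge assms(6) in blast)
qed

end
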